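(* Let $f:\mathbb{R}^{2}\to\mathbb{R}$ be smooth and either quasi normal or quasi split normal. Then for all $x,y\in\mathbb{R}$ and all $k_{1}\neq0$, $k_{2}\neq0$, the limits $F(k_{1},y)=\lim_{r\to\infty}\int_{-r}^{r}f(x,y)e^{-ik_{1}x}\,dx$ and $G(x,k_{2})=\lim_{r\to\infty}\int_{-r}^{r}f(x,y)e^{-ik_{2}y}\,dy$ both exist, and $y\mapsto F(k_{1},y)$ and $x\mapsto G(x,k_{2})$ are of moderate decrease (bounded by a constant times $|y|^{-2}$, resp. $|x|^{-2}$, for $|y|>1$, resp. $|x|>1$).
   Context: One-variable notions: a smooth $g:\mathbb{R}\setminus V\to\mathbb{R}$, $V\subset\mathbb{R}$ bounded closed, is analytic at infinity if there exist $\epsilon_{1},\epsilon_{2}>0$ such that $g(1/t)=\sum_{n\geq1}a_{n}t^{n}$ for $0<t<\epsilon_{1}$ and $g(1/t)=\sum_{n\geq1}b_{n}t^{n}$ for $-\epsilon_{2}<t<0$, with real coefficients and both power series absolutely convergent on the respective intervals. Two-variable notions: let $f:\mathbb{R}^{2}\setminus W\to\mathbb{R}$ be smooth with $W$ closed and bounded (here $W=\emptyset$). $f$ is of very moderate decrease if there is $C>0$ with $|f(x,y)|\leq\frac{C}{|(x,y)|}$ for $|(x,y)|>1$, and of moderate decrease if $|f(x,y)|\leq\frac{C}{|(x,y)|^{2}}$ for $|(x,y)|>1$. For fixed $x$ write $f_{x}(y)=f(x,y)$ and for fixed $y$ write $f_{y}(x)=f(x,y)$. Conditions: (i) for every $x$,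 $f_{x}$ is analytic at infinity; (ii) for every $y$, $f_{y}$ is analytic at infinity; (iii) $f$ is of very moderate decrease; (iv) $\frac{\partial f}{\partial x}$ and $\frac{\partial f}{\partial y}$ are of moderate decrease. $f$ is quasi normal if (i)–(iv) hold and (v)': for sufficiently large $x$, the zeros of $f_{x}$ are contained in a union $(-M_{x},-N_{x})\cup(N_{x},M_{x})$ of bounded intervals with $M_{x}-N_{x}$ uniformly bounded in $x$, and similarly for $(f_{x})'$, $(f_{x})''$ (each with its own such intervals), and for $f_{y},(f_{y})',(f_{y})''$ with sufficiently large $y$. $f$ is quasi split normal if (i)–(iv) hold and (v)'': for sufficiently large $(x,y)$, $f=f_{1}+f_{2}$ with $f_{1},f_{2}$ quasi normal and $f,f_{1},f_{2}$ smooth. *)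

theory Defs
  imports "HOL-Analysis.Analysis"
begin

text \<open>Functions on R^2 are modelled as functions on real \<times> real; norm (x,y) = sqrt(x^2+y^2).\<close>

fun Ck_on :: "nat \<Rightarrow> (real \<times> real) set \<Rightarrow> (real \<times> real \<Rightarrow> real) \<Rightarrow> bool" where
  "Ck_on 0 S f \<longleftrightarrow> continuous_on S f"
| "Ck_on (Suc n) S f \<longleftrightarrow>
     (\<exists>f'. (\<forall>p\<in>S. (f has_derivative f' p) (at p))
          \<and> Ck_on n S (\<lambda>p. f' p (1,0)) \<and> Ck_on n S (\<lambda>p. f' p (0,1)))"

definition smooth2 :: "(real \<times> real \<Rightarrow> real) \<Rightarrow> bool" where
  "smooth2 f \<longleftrightarrow> (\<forall>n. Ck_on n UNIV f)"

definition analytic_at_infinity :: "(real \<Rightarrow> real) \<Rightarrow> bool" where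
  "analytic_at_infinity g \<longleftrightarrow>
     (\<exists>\<epsilon>1 \<epsilon>2 a b. \<epsilon>1 > 0 \<and> \<epsilon>2 > 0 \<and> a 0 = 0 \<and> b 0 = 0 \<and>
        (\<forall>t. 0 < t \<and> t < \<epsilon>1 \<longrightarrow>
            summable (\<lambda>n. \<bar>a n * t ^ n\<bar>) \<and> g (1 / t) = (\<Sum>n. a n * t ^ n)) \<and>
        (\<forall>t. - \<epsilon>2 < t \<and> t < 0 \<longrightarrow>
            summable (\<lambda>n. \<bar>b n * t ^ n\<bar>) \<and> g (1 / t) = (\<Sum>n. b n * t ^ n)))"

definition very_moderate_decrease :: "(real \<times> real \<Rightarrow> real) \<Rightarrow> bool" where
  "very_moderate_decrease f \<longleftrightarrow> (\<exists>C>0. \<forall>p. norm p > 1 \<longrightarrow> \<bar>f p\<bar> \<le> C / norm p)"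

definition moderate_decrease :: "(real \<times> real \<Rightarrow> real) \<Rightarrow> bool" where
  "moderate_decrease f \<longleftrightarrow> (\<exists>C>0. \<forall>p. norm p > 1 \<longrightarrow> \<bar>f p\<bar> \<le> C / (norm p)\<^sup>2)"

definition partial_x :: "(real \<times> real \<Rightarrow> real) \<Rightarrow> real \<times> real \<Rightarrow> real" where
  "partial_x f p = deriv (\<lambda>x. f (x, snd p)) (fst p)"

definition partial_y :: "(real \<times> real \<Rightarrow> real) \<Rightarrow> real \<times> real \<Rightarrow> real" where
  "partial_y f p = deriv (\<lambda>y. f (fst p, y)) (snd p)"

definition conds_i_to_iv :: "(real \<times> real \<Rightarrow> real) \<Rightarrow> bool" where
  "conds_i_to_iv f \<longleftrightarrow>
     (\<forall>x. analytic_at_infinity (\<lambda>y. f (x, y))) \<and>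
     (\<forall>y. analytic_at_infinity (\<lambda>x. f (x, y))) \<and>
     very_moderate_decrease f \<and>
     moderate_decrease (partial_x f) \<and> moderate_decrease (partial_y f)"

definition zeros_in_shells :: "(real \<Rightarrow> real \<Rightarrow> real) \<Rightarrow> bool" where
  "zeros_in_shells h \<longleftrightarrow>
     (\<exists>R B. \<forall>s. \<bar>s\<bar> > R \<longrightarrow>
        (\<exists>M N. M - N \<le> B \<and> {t. h s t = 0} \<subseteq> {- M<..<- N} \<union> {N<..<M}))"

definition quasi_normal :: "(real \<times> real \<Rightarrow> real) \<Rightarrow> bool" where
  "quasi_normal f \<longleftrightarrow> conds_i_to_iv f \<and>
     zeros_in_shells (\<lambda>x y. f (x, y)) \<and>
     zeros_in_shells (\<lambda>x. deriv (\<lambda>y. f (x, y))) \<and>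
     zeros_in_shells (\<lambda>x. deriv (deriv (\<lambda>y. f (x, y)))) \<and>
     zeros_in_shells (\<lambda>y x. f (x, y)) \<and>
     zeros_in_shells (\<lambda>y. deriv (\<lambda>x. f (x, y))) \<and>
     zeros_in_shells (\<lambda>y. deriv (deriv (\<lambda>x. f (x, y))))"

definition quasi_split_normal :: "(real \<times> real \<Rightarrow> real) \<Rightarrow> bool" where
  "quasi_split_normal f \<longleftrightarrow> conds_i_to_iv f \<and>
     (\<exists>R f1 f2. smooth2 f1 \<and> smooth2 f2 \<and> quasi_normal f1 \<and> quasi_normal f2 \<and>
        (\<forall>p. norm p > R \<longrightarrow> f p = f1 p + f2 p))"

definition FT_x :: "(real \<times> real \<Rightarrow> real) \<Rightarrow> real \<Rightarrow> real \<Rightarrow> complex" where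
  "FT_x f k y = Lim at_top (\<lambda>r. integral {-r..r} (\<lambda>x. complex_of_real (f (x, y)) * exp (- \<i> * of_real k * of_real x)))"

definition FT_y :: "(real \<times> real \<Rightarrow> real) \<Rightarrow> real \<Rightarrow> real \<Rightarrow> complex" where
  "FT_y f x k = Lim at_top (\<lambda>r. integral {-r..r} (\<lambda>y. complex_of_real (f (x, y)) * exp (- \<i> * of_real k * of_real y)))"

end

theory Submission
  imports Defs
begin

(* For fixed y, integrating by parts in x writes the truncated transform of f(-,y) as boundary
   terms, which vanish as r tends to infinity because f is of very moderate decrease, plus
   1/(i k) times the truncated transform of the x-derivative; the latter converges because that
   derivative is O(1/x^2). So the limit exists and is bounded by 1/|k| times the truncated
   transforms of the x-derivative, and it remains to bound those by K/y^2. For large |y| the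
   x-derivative of f(-,y) is O(1/y^2) uniformly in x, and its own derivative vanishes only in two
   symmetric shells of bounded width. Off the shells the x-derivative is monotone, so a second
   integration by parts bounds each such piece by its total variation divided by |k|; the shells
   contribute at most their width times the supremum. A quasi split normal f is handled by
   additivity of these bounds, and the statement in y follows by exchanging the coordinates. *)

section \<open>Oscillatory integrals on the line\<close>

definition fourier_kernel :: "real \<Rightarrow> real \<Rightarrow> complex" where
  "fourier_kernel k x = exp (- \<i> * of_real k * of_real x)"

definition fourier_integral :: "(real \<Rightarrow> real) \<Rightarrow> real \<Rightarrow> real \<Rightarrow> real \<Rightarrow> complex" where
  "fourier_integral g k a b = integral {a..b} (\<lambda>x. of_real (g x) * fourier_kernel k x)"

lemma norm_fourier_kernel [simp]: "cmod (fourier_kernel k x) = 1"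
  unfolding fourier_kernel_def by (simp add: norm_exp_eq_Re)

lemma continuous_on_fourier_kernel [continuous_intros]: "continuous_on S (fourier_kernel k)"
  unfolding fourier_kernel_def by (intro continuous_intros)

lemma has_vector_derivative_fourier_kernel:
  "(fourier_kernel k has_vector_derivative (- \<i> * of_real k) * fourier_kernel k x) (at x within S)"
proof -
  have "((\<lambda>z. exp (- \<i> * of_real k * z)) has_field_derivative
      (- \<i> * of_real k) * exp (- \<i> * of_real k * of_real x)) (at (of_real x))"
    by (auto intro!: derivative_eq_intros)
  from has_vector_derivative_real_field[OF this, of S] show ?thesis
    by (simp add: fourier_kernel_def [abs_def])
qed

lemma fourier_integrable:
  "continuous_on {a..b} g \<Longrightarrow> (\<lambda>x. of_real (g x) * fourier_kernel k x) integrable_on {a..b}"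
  by (intro integrable_continuous_interval continuous_intros)

lemma fourier_integral_combine:
  assumes "continuous_on {a..b} g" "a \<le> c" "c \<le> b"
  shows "fourier_integral g k a b = fourier_integral g k a c + fourier_integral g k c b"
  unfolding fourier_integral_def
  using Henstock_Kurzweil_Integration.integral_combine[OF assms(2,3)
      fourier_integrable[OF assms(1)]]
  by simp

lemma fourier_integral_add:
  assumes "continuous_on {a..b} g" "continuous_on {a..b} h"
  shows "fourier_integral (\<lambda>x. g x + h x) k a b
    = fourier_integral g k a b + fourier_integral h k a b"
  unfolding fourier_integral_def
  using integral_add[OF fourier_integrable[OF assms(1)] fourier_integrable[OF assms(2)]]
  by (simp add: distrib_right)

lemma norm_fourier_integral_le_length:
  assumes "a \<le> b" "continuous_on {a..b} g" "\<And>x. x \<in> {a..b} \<Longrightarrow> \<bar>g x\<bar> \<le> S"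
  shows "cmod (fourier_integral g k a b) \<le> S * (b - a)"
  unfolding fourier_integral_def
  by (rule integral_bound) (use assms in \<open>auto intro!: continuous_intros simp: norm_mult\<close>)

lemma norm_fourier_integral_le_inverse_square:
  assumes "a \<le> b" "0 < a \<or> b < 0" "continuous_on {a..b} g"
    and bound: "\<And>x. x \<in> {a..b} \<Longrightarrow> \<bar>g x\<bar> \<le> C / x\<^sup>2"
  shows "cmod (fourier_integral g k a b) \<le> C * (1 / a - 1 / b)"
proof -
  have nonzero: "x \<noteq> 0" if "x \<in> {a..b}" for x using assms(2) that by auto
  have "cmod (fourier_integral g k a b) \<le> integral {a..b} (\<lambda>x. C / x\<^sup>2)"
    unfolding fourier_integral_def
    by (rule integral_norm_bound_integral[OF fourier_integrable[OF assms(3)]])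
       (use nonzero bound in \<open>auto intro!: integrable_continuous_interval continuous_intros
          simp: norm_mult\<close>)
  also have "\<dots> = - C / b - - C / a"
    by (rule integral_unique, rule fundamental_theorem_of_calculus[OF assms(1)])
       (use nonzero in \<open>auto intro!: derivative_eq_intros simp: power2_eq_square
          has_real_derivative_iff_has_vector_derivative[symmetric]\<close>)
  finally show ?thesis by (simp add: field_simps)
qed

lemma fourier_integral_by_parts:
  assumes "a \<le> b" and deriv: "\<And>x. x \<in> {a..b} \<Longrightarrow> (g has_real_derivative g' x) (at x)"
    and "continuous_on {a..b} g'" and "k \<noteq> 0"
  shows "fourier_integral g k a b =
    (of_real (g a) * fourier_kernel k a - of_real (g b) * fourier_kernel k b
      + fourier_integral g' k a b) / (\<i> * of_real k)"
proof -
  define U where "U = (\<lambda>x. of_real (g x) * fourier_kernel k x)"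
  have "(U has_vector_derivative
      of_real (g' x) * fourier_kernel k x - \<i> * of_real k * U x) (at x within {a..b})"
    if "x \<in> {a..b}" for x
    using has_vector_derivative_mult[OF has_vector_derivative_of_real
        [OF DERIV_subset[OF deriv[OF that], of "{a..b}"]]
        has_vector_derivative_fourier_kernel[of k x]]
    by (simp add: U_def algebra_simps)
  then have "((\<lambda>x. of_real (g' x) * fourier_kernel k x - \<i> * of_real k * U x)
      has_integral U b - U a) {a..b}"
    by (rule fundamental_theorem_of_calculus[OF \<open>a \<le> b\<close>])
  moreover have "((\<lambda>x. of_real (g' x) * fourier_kernel k x - \<i> * of_real k * U x)
      has_integral fourier_integral g' k a b - \<i> * of_real k * fourier_integral g k a b) {a..b}"
  proof -
    have "continuous_on {a..b} g"
      using deriv by (meson DERIV_isCont continuous_at_imp_continuous_on)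
    then show ?thesis
      unfolding fourier_integral_def U_def
      by (intro has_integral_diff has_integral_mult_right integrable_integral
          fourier_integrable assms(3))
  qed
  ultimately have "fourier_integral g' k a b - \<i> * of_real k * fourier_integral g k a b = U b - U a"
    by (rule has_integral_unique[rotated])
  then show ?thesis
    using \<open>k \<noteq> 0\<close> by (simp add: U_def field_simps)
qed

lemma norm_fourier_integral_le_of_nonneg_deriv:
  assumes "a \<le> b" and deriv: "\<And>x. x \<in> {a..b} \<Longrightarrow> (g has_real_derivative g' x) (at x)"
    and "continuous_on {a..b} g'" and "\<And>x. x \<in> {a..b} \<Longrightarrow> 0 \<le> g' x"
  shows "cmod (fourier_integral g' k a b) \<le> g b - g a"
proof -
  have "cmod (fourier_integral g' k a b) \<le> integral {a..b} g'"
    unfolding fourier_integral_def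
    by (rule integral_norm_bound_integral[OF fourier_integrable])
       (use assms in \<open>auto intro: integrable_continuous_interval simp: norm_mult\<close>)
  also have "\<dots> = g b - g a"
    by (rule integral_unique, rule fundamental_theorem_of_calculus[OF \<open>a \<le> b\<close>])
       (use deriv in \<open>auto intro: DERIV_subset
          simp: has_real_derivative_iff_has_vector_derivative[symmetric]\<close>)
  finally show ?thesis .
qed

lemma continuous_on_nonneg_or_nonpos:
  fixes h :: "real \<Rightarrow> real"
  assumes "continuous_on {a..b} h" "\<And>x. x \<in> {a<..<b} \<Longrightarrow> h x \<noteq> 0"
  shows "(\<forall>x\<in>{a..b}. 0 \<le> h x) \<or> (\<forall>x\<in>{a..b}. h x \<le> 0)"
proof (rule ccontr)
  assume "\<not> ?thesis"
  then obtain u v where uv: "u \<in> {a..b}" "v \<in> {a..b}" "h u < 0" "0 < h v"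
    by (auto simp: not_le)
  have "is_interval (h ` {min u v..max u v})"
    using uv by (intro connected_continuous_image[THEN is_interval_connected_1[THEN iffD2]]
        continuous_on_subset[OF assms(1)]) auto
  moreover have "h u \<in> h ` {min u v..max u v}" "h v \<in> h ` {min u v..max u v}" by auto
  ultimately have "0 \<in> h ` {min u v..max u v}"
    using uv unfolding is_interval_1 by (meson less_imp_le)
  then obtain z where "z \<in> {min u v..max u v}" "h z = 0" by auto
  moreover from this uv have "z \<noteq> u" "z \<noteq> v" by auto
  ultimately have "z \<in> {a<..<b}"
    using uv by (auto simp: min_def max_def split: if_splits)
  with \<open>h z = 0\<close> assms(2) show False by blast
qed

lemma norm_fourier_integral_deriv_le_variation:
  assumes "a \<le> b" and deriv: "\<And>x. x \<in> {a..b} \<Longrightarrow> (h has_real_derivative h' x) (at x)"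
    and "continuous_on {a..b} h'" and "\<And>x. x \<in> {a<..<b} \<Longrightarrow> h' x \<noteq> 0"
  shows "cmod (fourier_integral h' k a b) \<le> \<bar>h b - h a\<bar>"
  using continuous_on_nonneg_or_nonpos[OF assms(3,4)]
proof
  assume "\<forall>x\<in>{a..b}. 0 \<le> h' x"
  then have "cmod (fourier_integral h' k a b) \<le> h b - h a"
    by (intro norm_fourier_integral_le_of_nonneg_deriv[OF assms(1-3)]) auto
  then show ?thesis by linarith
next
  assume "\<forall>x\<in>{a..b}. h' x \<le> 0"
  then have "cmod (fourier_integral (\<lambda>x. - h' x) k a b) \<le> - h b - - h a"
    using assms(1,3) deriv
    by (intro norm_fourier_integral_le_of_nonneg_deriv)
       (auto intro: derivative_intros continuous_intros)
  then show ?thesis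
    by (simp add: fourier_integral_def integral_neg)
qed

lemma norm_fourier_integral_le_of_deriv_nonzero:
  assumes "a \<le> b" and deriv: "\<And>x. x \<in> {a..b} \<Longrightarrow> (h has_real_derivative h' x) (at x)"
    and "continuous_on {a..b} h'" and "\<And>x. x \<in> {a<..<b} \<Longrightarrow> h' x \<noteq> 0"
    and bound: "\<And>x. x \<in> {a..b} \<Longrightarrow> \<bar>h x\<bar> \<le> S" and "k \<noteq> 0"
  shows "cmod (fourier_integral h k a b) \<le> 4 * S / \<bar>k\<bar>"
proof -
  let ?boundary = "of_real (h a) * fourier_kernel k a - of_real (h b) * fourier_kernel k b"
  have "cmod ?boundary \<le> \<bar>h a\<bar> + \<bar>h b\<bar>"
    by (rule order.trans[OF norm_triangle_ineq4]) (simp add: norm_mult)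
  then have "cmod (?boundary + fourier_integral h' k a b) \<le> 4 * S"
    using norm_triangle_ineq[of ?boundary "fourier_integral h' k a b"]
      norm_fourier_integral_deriv_le_variation[OF assms(1-4), of k] bound[of a] bound[of b] \<open>a \<le> b\<close>
    by auto
  moreover have "cmod (\<i> * of_real k) = \<bar>k\<bar>"
    by (simp add: norm_mult)
  moreover note fourier_integral_by_parts[OF assms(1-3,6)]
  ultimately show ?thesis
    by (simp add: norm_divide divide_right_mono)
qed

lemma convergent_at_top_of_dist_bound:
  fixes \<Phi> :: "real \<Rightarrow> 'a::{complete_space,uniformity_dist}"
  assumes "(\<epsilon> \<longlongrightarrow> 0) at_top" and "\<And>r s. R \<le> r \<Longrightarrow> r \<le> s \<Longrightarrow> dist (\<Phi> s) (\<Phi> r) \<le> \<epsilon> r"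
  shows "\<exists>L. (\<Phi> \<longlongrightarrow> L) at_top"
proof -
  have "cauchy_filter (filtermap \<Phi> at_top)"
    unfolding cauchy_filter_metric_filtermap
  proof (intro allI impI)
    fix e :: real assume "e > 0"
    with assms(1) have "eventually (\<lambda>r. R \<le> r \<and> \<epsilon> r < e) at_top"
      by (intro eventually_conj eventually_ge_at_top) (auto dest: order_tendstoD)
    moreover have "dist (\<Phi> r) (\<Phi> s) < e" if "R \<le> r \<and> \<epsilon> r < e" "R \<le> s \<and> \<epsilon> s < e" for r s
      using that assms(2)[of r s] assms(2)[of s r] by (cases "r \<le> s") (auto simp: dist_commute)
    ultimately show "\<exists>P. eventually P at_top \<and> (\<forall>r s. P r \<and> P s \<longrightarrow> dist (\<Phi> r) (\<Phi> s) < e)"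
      by blast
  qed
  then show ?thesis
    using cauchy_filter_convergent unfolding convergent_filter_iff filterlim_def by blast
qed

lemma dist_fourier_integral_symmetric_le:
  assumes "continuous_on UNIV h" and bound: "\<And>x. 2 \<le> \<bar>x\<bar> \<Longrightarrow> \<bar>h x\<bar> \<le> C / x\<^sup>2"
    and "2 \<le> r" "r \<le> s"
  shows "dist (fourier_integral h k (-s) s) (fourier_integral h k (-r) r) \<le> 2 * C / r"
proof -
  have cont: "continuous_on {a..b} h" for a b
    using assms(1) by (rule continuous_on_subset) auto
  have "fourier_integral h k (-s) s - fourier_integral h k (-r) r
      = fourier_integral h k (-s) (-r) + fourier_integral h k r s"
    using fourier_integral_combine[OF cont, of "-s" "-r" s k]
      fourier_integral_combine[OF cont, of "-r" r s k] assms(3,4) by simp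
  moreover have "cmod (fourier_integral h k (-s) (-r)) \<le> C * (1 / r - 1 / s)"
    using norm_fourier_integral_le_inverse_square[OF _ _ cont bound, of "-s" "-r" k] assms(3,4)
    by (simp add: algebra_simps)
  moreover have "cmod (fourier_integral h k r s) \<le> C * (1 / r - 1 / s)"
    using assms(3,4) by (intro norm_fourier_integral_le_inverse_square cont bound) auto
  moreover have "C * (1 / r - 1 / s) \<le> C / r"
    using bound[of 2] assms(3,4) by (auto simp: zero_le_divide_iff field_simps)
  ultimately show ?thesis
    using norm_triangle_ineq[of "fourier_integral h k (-s) (-r)" "fourier_integral h k r s"]
    by (simp add: dist_norm)
qed

lemma fourier_integral_convergent:
  assumes "continuous_on UNIV h" and "\<And>x. 2 \<le> \<bar>x\<bar> \<Longrightarrow> \<bar>h x\<bar> \<le> C / x\<^sup>2"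
  shows "\<exists>L. ((\<lambda>r. fourier_integral h k (-r) r) \<longlongrightarrow> L) at_top"
proof (rule convergent_at_top_of_dist_bound[where R=2])
  show "((\<lambda>r. 2 * C / r) \<longlongrightarrow> 0) at_top"
    by (intro tendsto_divide_0[OF tendsto_const] filterlim_at_top_imp_at_infinity filterlim_ident)
qed (rule dist_fourier_integral_symmetric_le[OF assms])

lemma fourier_integral_tendsto_by_parts:
  assumes deriv: "\<And>x. (g has_real_derivative g' x) (at x)" and "continuous_on UNIV g'"
    and "(g \<longlongrightarrow> 0) at_top" "(g \<longlongrightarrow> 0) at_bot" and "k \<noteq> 0"
    and "((\<lambda>r. fourier_integral g' k (-r) r) \<longlongrightarrow> L) at_top"
  shows "((\<lambda>r. fourier_integral g k (-r) r) \<longlongrightarrow> L / (\<i> * of_real k)) at_top"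
proof -
  define U where "U = (\<lambda>x. of_real (g x) * fourier_kernel k x)"
  have norm_U: "norm (U x) = \<bar>g x\<bar>" for x
    by (simp add: U_def norm_mult)
  have "(U \<longlongrightarrow> 0) at_top"
    by (rule tendsto_norm_zero_cancel) (unfold norm_U, rule tendsto_rabs_zero[OF assms(3)])
  moreover have "((\<lambda>r. U (- r)) \<longlongrightarrow> 0) at_top"
    by (rule tendsto_norm_zero_cancel, unfold norm_U)
       (rule tendsto_rabs_zero[OF assms(4)[unfolded filterlim_at_bot_mirror]])
  ultimately have "((\<lambda>r. (U (- r) - U r + fourier_integral g' k (-r) r) / (\<i> * of_real k))
      \<longlongrightarrow> (0 - 0 + L) / (\<i> * of_real k)) at_top"
    using assms(5,6) by (intro tendsto_intros) auto
  moreover have "eventually (\<lambda>r. (U (- r) - U r + fourier_integral g' k (-r) r) / (\<i> * of_real k)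
      = fourier_integral g k (-r) r) at_top"
    using eventually_ge_at_top[of 0]
  proof eventually_elim
    case (elim r)
    show ?case
      unfolding U_def
      by (rule fourier_integral_by_parts[symmetric])
         (use elim deriv assms(5) continuous_on_subset[OF assms(2)] in auto)
  qed
  ultimately show ?thesis
    by (simp add: tendsto_cong)
qed

lemma symmetric_shells_normalize:
  fixes Z :: "real set"
  assumes "Z \<subseteq> {-M<..<-N} \<union> {N<..<M}" "M - N \<le> B"
  obtains N' M' where "0 \<le> N'" "N' \<le> M'" "M' - N' \<le> max B 0" "Z \<subseteq> {-M'..-N'} \<union> {N'..M'}"
proof (cases "N < M")
  case False
  then have "Z = {}" using assms(1) by auto
  then show ?thesis by (intro that[of 0 0]) auto
next
  case True
  consider "0 \<le> N" | "N < 0" "M \<le> 0" | "N < 0" "0 < M" by linarith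
  then show ?thesis
  proof cases
    case 1
    then show ?thesis using assms True by (intro that[of N M]) auto
  next
    case 2
    then show ?thesis using assms True by (intro that[of "-M" "-N"]) auto
  next
    case 3
    have "Z \<subseteq> {- max M (- N)..max M (- N)}"
      using assms(1) by (force simp: subset_iff)
    then show ?thesis using assms(2) 3 by (intro that[of 0 "max M (-N)"]) auto
  qed
qed

lemma norm_fourier_integral_le_shells:
  assumes deriv: "\<And>x. (h has_real_derivative h' x) (at x)" and "continuous_on UNIV h'"
    and bound: "\<And>x. \<bar>h x\<bar> \<le> S"
    and shells: "0 \<le> N" "N \<le> M" "M - N \<le> B" and zeros: "{x. h' x = 0} \<subseteq> {-M..-N} \<union> {N..M}"
    and "k \<noteq> 0" "M \<le> r"
  shows "cmod (fourier_integral h k (-r) r) \<le> 12 * S / \<bar>k\<bar> + 2 * B * S"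
proof -
  have cont: "continuous_on A h" for A
    using deriv by (meson DERIV_isCont continuous_at_imp_continuous_on)
  have cont': "continuous_on A h'" for A
    using assms(2) by (rule continuous_on_subset) auto
  have monotone_piece: "cmod (fourier_integral h k a b) \<le> 4 * S / \<bar>k\<bar>"
    if "a \<le> b" "{a<..<b} \<inter> ({-M..-N} \<union> {N..M}) = {}" for a b
    using that zeros \<open>k \<noteq> 0\<close>
    by (intro norm_fourier_integral_le_of_deriv_nonzero[OF _ deriv cont' _ bound]) auto
  have short_piece: "cmod (fourier_integral h k a b) \<le> S * B" if "a \<le> b" "b - a \<le> B" for a b
    using norm_fourier_integral_le_length[OF \<open>a \<le> b\<close> cont bound, of k] that
      bound[of 0] by (smt (verit) mult_left_mono)
  have "fourier_integral h k (-r) r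
      = fourier_integral h k (-r) (-M) + fourier_integral h k (-M) (-N)
      + fourier_integral h k (-N) N + fourier_integral h k N M + fourier_integral h k M r"
    using fourier_integral_combine[OF cont] shells \<open>M \<le> r\<close>
    by (smt (verit, ccfv_threshold))
  also have "cmod \<dots> \<le> 4 * S / \<bar>k\<bar> + S * B + 4 * S / \<bar>k\<bar> + S * B + 4 * S / \<bar>k\<bar>"
    using shells \<open>M \<le> r\<close>
    by (intro norm_triangle_le add_mono monotone_piece short_piece) auto
  finally show ?thesis
    by (simp add: field_simps)
qed

lemma norm_fourier_integral_le_of_bounded_inverse_square:
  assumes "continuous_on UNIV h" and bound: "\<And>x. \<bar>h x\<bar> \<le> C"
    and bound_inverse_square: "\<And>x. x \<noteq> 0 \<Longrightarrow> \<bar>h x\<bar> \<le> C / x\<^sup>2" and "1 \<le> r"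
  shows "cmod (fourier_integral h k (-r) r) \<le> 4 * C"
proof -
  have cont: "continuous_on A h" for A
    using assms(1) by (rule continuous_on_subset) auto
  have "fourier_integral h k (-r) r
      = fourier_integral h k (-r) (-1) + fourier_integral h k (-1) 1 + fourier_integral h k 1 r"
    using fourier_integral_combine[OF cont] \<open>1 \<le> r\<close> by (smt (verit, ccfv_threshold))
  also have "cmod \<dots> \<le> C * (1 / - r - 1 / - 1) + C * (1 - - 1) + C * (1 / 1 - 1 / r)"
    using \<open>1 \<le> r\<close>
    by (intro norm_triangle_le add_mono norm_fourier_integral_le_inverse_square
        norm_fourier_integral_le_length cont bound bound_inverse_square) auto
  also have "\<dots> \<le> 4 * C"
    using bound[of 0] \<open>1 \<le> r\<close> by (simp add: field_simps)
  finally show ?thesis .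
qed

section \<open>Partial derivatives and exchange of coordinates\<close>

lemma has_real_derivative_slice_x:
  assumes "(f has_derivative f') (at (x, y))"
  shows "((\<lambda>x. f (x, y)) has_real_derivative f' (1, 0)) (at x)"
proof -
  have "((\<lambda>x. (x, y)) has_derivative (\<lambda>t. (t, 0))) (at x)"
    by (intro has_derivative_Pair has_derivative_ident has_derivative_const)
  from has_derivative_compose[OF this assms]
  have "((\<lambda>x. f (x, y)) has_derivative (\<lambda>t. f' (t, 0))) (at x)" .
  moreover have "(\<lambda>t. f' (t, 0)) = (*) (f' (1, 0))"
  proof
    fix t :: real
    have "f' (t, 0) = f' (t *\<^sub>R (1, 0))" by simp
    also have "\<dots> = t *\<^sub>R f' (1, 0)" by (rule linear_scale[OF has_derivative_linear[OF assms]])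
    finally show "f' (t, 0) = f' (1, 0) * t" by simp
  qed
  ultimately show ?thesis
    unfolding has_field_derivative_def by simp
qed

lemma deriv_slice_x: "deriv (\<lambda>x. f (x, y)) = (\<lambda>x. partial_x f (x, y))"
  by (simp add: partial_x_def)

lemma Ck_on_Suc_partial_x:
  assumes "Ck_on (Suc n) UNIV f"
  shows "Ck_on n UNIV (partial_x f)"
    and "((\<lambda>x. f (x, y)) has_real_derivative partial_x f (x, y)) (at x)"
proof -
  obtain f' where f': "\<And>p. (f has_derivative f' p) (at p)" and "Ck_on n UNIV (\<lambda>p. f' p (1, 0))"
    using assms by auto
  moreover have partial: "partial_x f = (\<lambda>p. f' p (1, 0))"
    using DERIV_imp_deriv[OF has_real_derivative_slice_x[OF f']]
    by (auto simp: partial_x_def fun_eq_iff)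
  ultimately show "Ck_on n UNIV (partial_x f)"
    by simp
  show "((\<lambda>x. f (x, y)) has_real_derivative partial_x f (x, y)) (at x)"
    unfolding partial using has_real_derivative_slice_x[OF f'] .
qed

lemma smooth2_has_partial_x:
  "smooth2 f \<Longrightarrow> ((\<lambda>x. f (x, y)) has_real_derivative partial_x f (x, y)) (at x)"
  by (rule Ck_on_Suc_partial_x(2)[of 0]) (simp only: smooth2_def)

lemma smooth2_partial_x: "smooth2 f \<Longrightarrow> smooth2 (partial_x f)"
  unfolding smooth2_def by (blast intro: Ck_on_Suc_partial_x(1))

lemma smooth2_continuous_on_slice_x: "smooth2 f \<Longrightarrow> continuous_on UNIV (\<lambda>x. f (x, y))"
  by (intro continuous_at_imp_continuous_on ballI DERIV_isCont[OF smooth2_has_partial_x])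

lemma Ck_on_swap: "Ck_on n UNIV f \<Longrightarrow> Ck_on n UNIV (f \<circ> prod.swap)"
proof (induction n arbitrary: f)
  case 0
  then have "continuous_on UNIV f" by simp
  then show ?case
    using continuous_on_compose[OF continuous_on_swap continuous_on_subset[of UNIV f]] by auto
next
  case (Suc n)
  then obtain f' where f': "\<And>p. (f has_derivative f' p) (at p)"
    and "Ck_on n UNIV (\<lambda>p. f' p (1, 0))" "Ck_on n UNIV (\<lambda>p. f' p (0, 1))"
    by auto
  then have "Ck_on n UNIV ((\<lambda>p. f' p (0, 1)) \<circ> prod.swap)"
    "Ck_on n UNIV ((\<lambda>p. f' p (1, 0)) \<circ> prod.swap)"
    using Suc.IH by blast+
  moreover have "((\<lambda>q. f (prod.swap q)) has_derivative (\<lambda>v. f' (prod.swap p) (prod.swap v))) (at p)"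
    for p
  proof -
    have "(prod.swap has_derivative prod.swap) (at p)"
      by (auto intro!: derivative_eq_intros simp: prod.swap_def [abs_def])
    from has_derivative_compose[OF this f'] show ?thesis .
  qed
  ultimately show ?case
    unfolding Ck_on.simps(2) comp_def
    by (intro exI[of _ "\<lambda>p v. f' (prod.swap p) (prod.swap v)"]) simp
qed

lemma smooth2_swap: "smooth2 f \<Longrightarrow> smooth2 (f \<circ> prod.swap)"
  unfolding smooth2_def by (blast intro: Ck_on_swap)

lemma partial_x_swap: "partial_x (f \<circ> prod.swap) = partial_y f \<circ> prod.swap"
  by (simp add: partial_x_def partial_y_def fun_eq_iff)

lemma partial_y_swap: "partial_y (f \<circ> prod.swap) = partial_x f \<circ> prod.swap"
  by (simp add: partial_x_def partial_y_def fun_eq_iff)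

lemma norm_swap: "norm (prod.swap p) = norm p"
  by (simp add: norm_prod_def prod.swap_def add.commute)

lemma very_moderate_decrease_swap:
  assumes "very_moderate_decrease f"
  shows "very_moderate_decrease (f \<circ> prod.swap)"
proof -
  obtain C where "C > 0" and C: "\<And>p. norm p > 1 \<Longrightarrow> \<bar>f p\<bar> \<le> C / norm p"
    using assms unfolding very_moderate_decrease_def by blast
  have "\<bar>(f \<circ> prod.swap) p\<bar> \<le> C / norm p" if "norm p > 1" for p
    using C[of "prod.swap p"] that by (simp add: norm_swap)
  with \<open>C > 0\<close> show ?thesis
    unfolding very_moderate_decrease_def by blast
qed

lemma moderate_decrease_swap:
  assumes "moderate_decrease f"
  shows "moderate_decrease (f \<circ> prod.swap)"
proof -
  obtain C where "C > 0" and C: "\<And>p. norm p > 1 \<Longrightarrow> \<bar>f p\<bar> \<le> C / (norm p)\<^sup>2"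
    using assms unfolding moderate_decrease_def by blast
  have "\<bar>(f \<circ> prod.swap) p\<bar> \<le> C / (norm p)\<^sup>2" if "norm p > 1" for p
    using C[of "prod.swap p"] that by (simp add: norm_swap)
  with \<open>C > 0\<close> show ?thesis
    unfolding moderate_decrease_def by blast
qed

lemma conds_i_to_iv_swap:
  assumes "conds_i_to_iv f"
  shows "conds_i_to_iv (f \<circ> prod.swap)"
proof -
  have "(\<forall>x. analytic_at_infinity (\<lambda>y. (f \<circ> prod.swap) (x, y)))
      \<and> (\<forall>y. analytic_at_infinity (\<lambda>x. (f \<circ> prod.swap) (x, y)))"
    using assms unfolding conds_i_to_iv_def by simp
  moreover have "very_moderate_decrease (f \<circ> prod.swap)"
    using assms unfolding conds_i_to_iv_def by (blast intro: very_moderate_decrease_swap)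
  moreover have "moderate_decrease (partial_x (f \<circ> prod.swap))"
    "moderate_decrease (partial_y (f \<circ> prod.swap))"
    using assms unfolding conds_i_to_iv_def partial_x_swap partial_y_swap
    by (blast intro: moderate_decrease_swap)+
  ultimately show ?thesis
    unfolding conds_i_to_iv_def by blast
qed

section \<open>Decay of the partial transforms in the transverse variable\<close>

definition fourier_x_quadratic_decay :: "(real \<times> real \<Rightarrow> real) \<Rightarrow> real \<Rightarrow> bool" where
  "fourier_x_quadratic_decay h k \<longleftrightarrow> (\<exists>R K. \<forall>y. R < \<bar>y\<bar> \<longrightarrow>
     (\<forall>\<^sub>F r in at_top. cmod (fourier_integral (\<lambda>x. h (x, y)) k (-r) r) \<le> K / y\<^sup>2))"

lemma divide_square_le_divide_square:
  fixes a b C :: real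
  assumes "0 \<le> C" "a \<noteq> 0" "\<bar>a\<bar> \<le> b"
  shows "C / b\<^sup>2 \<le> C / a\<^sup>2"
proof -
  have "a\<^sup>2 \<le> b\<^sup>2"
    using power_mono[OF assms(3) abs_ge_zero, of 2] by simp
  then show ?thesis
    using assms by (intro divide_left_mono) auto
qed

lemma moderate_decrease_bounds:
  assumes "moderate_decrease h"
  obtains C where "0 \<le> C"
    and "\<And>x y. 1 < norm (x, y) \<Longrightarrow> x \<noteq> 0 \<Longrightarrow> \<bar>h (x, y)\<bar> \<le> C / x\<^sup>2"
    and "\<And>x y. 1 < norm (x, y) \<Longrightarrow> y \<noteq> 0 \<Longrightarrow> \<bar>h (x, y)\<bar> \<le> C / y\<^sup>2"
proof -
  obtain C where "C > 0" and C: "\<And>p. norm p > 1 \<Longrightarrow> \<bar>h p\<bar> \<le> C / (norm p)\<^sup>2"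
    using assms unfolding moderate_decrease_def by blast
  show ?thesis
  proof (rule that[of C])
    show "\<bar>h (x, y)\<bar> \<le> C / x\<^sup>2" if "1 < norm (x, y)" "x \<noteq> 0" for x y
      using C[OF that(1)] divide_square_le_divide_square[of C, OF _ that(2)
          norm_fst_le[of x y, unfolded real_norm_def]] \<open>C > 0\<close>
      by linarith
    show "\<bar>h (x, y)\<bar> \<le> C / y\<^sup>2" if "1 < norm (x, y)" "y \<noteq> 0" for x y
      using C[OF that(1)] divide_square_le_divide_square[of C, OF _ that(2)
          norm_snd_le[of y x, unfolded real_norm_def]] \<open>C > 0\<close>
      by linarith
  qed (use \<open>C > 0\<close> in simp)
qed

lemma very_moderate_decrease_slice_x_tendsto:
  assumes "very_moderate_decrease f"
  shows "((\<lambda>x. f (x, y)) \<longlongrightarrow> 0) at_infinity"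
proof -
  obtain C where "C > 0" and C: "\<And>p. norm p > 1 \<Longrightarrow> \<bar>f p\<bar> \<le> C / norm p"
    using assms unfolding very_moderate_decrease_def by blast
  have "\<bar>f (x, y)\<bar> \<le> C / norm x" if "2 \<le> norm x" for x
  proof -
    have "1 < norm (x, y)" using that norm_fst_le[of x y] by linarith
    then show ?thesis
      using C[of "(x, y)"] \<open>C > 0\<close> that norm_fst_le[of x y] by (smt (verit) frac_le)
  qed
  then have "eventually (\<lambda>x. norm (f (x, y)) \<le> C / norm x) at_infinity"
    unfolding eventually_at_infinity by auto
  moreover have "((\<lambda>x. C / norm x) \<longlongrightarrow> 0) at_infinity"
    by (intro tendsto_divide_0[OF tendsto_const] filterlim_at_top_imp_at_infinity
        filterlim_norm_at_top)
  ultimately show ?thesis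
    by (rule Lim_null_comparison)
qed

lemma fourier_x_quadratic_decay_of_zeros_in_shells:
  assumes smooth: "smooth2 h" and "moderate_decrease h"
    and zeros: "zeros_in_shells (\<lambda>y x. partial_x h (x, y))" and "k \<noteq> 0"
  shows "fourier_x_quadratic_decay h k"
proof -
  obtain C where C: "\<And>x y. 1 < norm (x, y) \<Longrightarrow> y \<noteq> 0 \<Longrightarrow> \<bar>h (x, y)\<bar> \<le> C / y\<^sup>2"
    using moderate_decrease_bounds[OF assms(2)] by metis
  obtain R B where RB: "\<And>y. R < \<bar>y\<bar> \<Longrightarrow> \<exists>M N. M - N \<le> B \<and>
      {x. partial_x h (x, y) = 0} \<subseteq> {-M<..<-N} \<union> {N<..<M}"
    using zeros unfolding zeros_in_shells_def by blast
  define K where "K = 12 * C / \<bar>k\<bar> + 2 * max B 0 * C"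
  have "\<forall>\<^sub>F r in at_top. cmod (fourier_integral (\<lambda>x. h (x, y)) k (-r) r) \<le> K / y\<^sup>2"
    if y: "max R 1 < \<bar>y\<bar>" for y
  proof -
    obtain N M where shells: "0 \<le> N" "N \<le> M" "M - N \<le> max B 0"
      and zeros_y: "{x. partial_x h (x, y) = 0} \<subseteq> {-M..-N} \<union> {N..M}"
      using RB[of y] y symmetric_shells_normalize by (metis max.strict_boundedE)
    have bound_y: "\<bar>h (x, y)\<bar> \<le> C / y\<^sup>2" for x
      using C[of x y] norm_snd_le[of y x] y by auto
    have bound_r: "cmod (fourier_integral (\<lambda>x. h (x, y)) k (-r) r)
        \<le> 12 * (C / y\<^sup>2) / \<bar>k\<bar> + 2 * max B 0 * (C / y\<^sup>2)" if "M \<le> r" for r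
      using norm_fourier_integral_le_shells[OF smooth2_has_partial_x[OF smooth]
          smooth2_continuous_on_slice_x[OF smooth2_partial_x[OF smooth]] bound_y shells zeros_y
          \<open>k \<noteq> 0\<close> that] .
    have "12 * (C / y\<^sup>2) / \<bar>k\<bar> + 2 * max B 0 * (C / y\<^sup>2) = K / y\<^sup>2"
      using \<open>k \<noteq> 0\<close> y by (auto simp: K_def field_simps)
    with bound_r show ?thesis
      unfolding eventually_at_top_linorder by auto
  qed
  then show ?thesis
    unfolding fourier_x_quadratic_decay_def by blast
qed

lemma fourier_x_quadratic_decay_add:
  assumes "fourier_x_quadratic_decay h1 k" "fourier_x_quadratic_decay h2 k"
    and "\<And>y. continuous_on UNIV (\<lambda>x. h1 (x, y))" "\<And>y. continuous_on UNIV (\<lambda>x. h2 (x, y))"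
    and sum: "\<And>x y. R < \<bar>y\<bar> \<Longrightarrow> h (x, y) = h1 (x, y) + h2 (x, y)"
  shows "fourier_x_quadratic_decay h k"
proof -
  obtain R1 K1 where K1: "\<And>y. R1 < \<bar>y\<bar> \<Longrightarrow>
      \<forall>\<^sub>F r in at_top. cmod (fourier_integral (\<lambda>x. h1 (x, y)) k (-r) r) \<le> K1 / y\<^sup>2"
    using assms(1) unfolding fourier_x_quadratic_decay_def by blast
  obtain R2 K2 where K2: "\<And>y. R2 < \<bar>y\<bar> \<Longrightarrow>
      \<forall>\<^sub>F r in at_top. cmod (fourier_integral (\<lambda>x. h2 (x, y)) k (-r) r) \<le> K2 / y\<^sup>2"
    using assms(2) unfolding fourier_x_quadratic_decay_def by blast
  have "\<forall>\<^sub>F r in at_top. cmod (fourier_integral (\<lambda>x. h (x, y)) k (-r) r) \<le> (K1 + K2) / y\<^sup>2"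
    if y: "max R (max R1 R2) < \<bar>y\<bar>" for y
  proof -
    have split: "fourier_integral (\<lambda>x. h (x, y)) k (-r) r
        = fourier_integral (\<lambda>x. h1 (x, y)) k (-r) r + fourier_integral (\<lambda>x. h2 (x, y)) k (-r) r"
      for r
      using sum y fourier_integral_add[OF continuous_on_subset[OF assms(3)]
          continuous_on_subset[OF assms(4)]]
      by simp
    have "R1 < \<bar>y\<bar>" "R2 < \<bar>y\<bar>"
      using y by auto
    from K1[OF this(1)] K2[OF this(2)] show ?thesis
    proof eventually_elim
      case (elim r)
      then show ?case
        unfolding split add_divide_distrib by (rule order.trans[OF norm_triangle_ineq add_mono])
    qed
  qed
  then show ?thesis
    unfolding fourier_x_quadratic_decay_def by blast
qed

lemma fourier_x_quadratic_decay_beyond_one: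
  assumes "fourier_x_quadratic_decay h k" "moderate_decrease h"
    and cont: "\<And>y. continuous_on UNIV (\<lambda>x. h (x, y))"
  obtains K where "\<And>y. 1 < \<bar>y\<bar> \<Longrightarrow>
    \<forall>\<^sub>F r in at_top. cmod (fourier_integral (\<lambda>x. h (x, y)) k (-r) r) \<le> K / y\<^sup>2"
proof -
  obtain R K where K: "\<And>y. R < \<bar>y\<bar> \<Longrightarrow>
      \<forall>\<^sub>F r in at_top. cmod (fourier_integral (\<lambda>x. h (x, y)) k (-r) r) \<le> K / y\<^sup>2"
    using assms(1) unfolding fourier_x_quadratic_decay_def by blast
  obtain C where "0 \<le> C"
    and C_x: "\<And>x y. 1 < norm (x, y) \<Longrightarrow> x \<noteq> 0 \<Longrightarrow> \<bar>h (x, y)\<bar> \<le> C / x\<^sup>2"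
    and C_y: "\<And>x y. 1 < norm (x, y) \<Longrightarrow> y \<noteq> 0 \<Longrightarrow> \<bar>h (x, y)\<bar> \<le> C / y\<^sup>2"
    using moderate_decrease_bounds[OF assms(2)] by metis
  have "\<forall>\<^sub>F r in at_top.
      cmod (fourier_integral (\<lambda>x. h (x, y)) k (-r) r) \<le> max K (4 * C * R\<^sup>2) / y\<^sup>2"
    if y: "1 < \<bar>y\<bar>" for y
  proof (cases "R < \<bar>y\<bar>")
    case True
    have "K / y\<^sup>2 \<le> max K (4 * C * R\<^sup>2) / y\<^sup>2"
      by (simp add: divide_right_mono)
    with K[OF True] show ?thesis
      by (auto elim: eventually_mono)
  next
    case False
    have y2: "1 \<le> y\<^sup>2" "y\<^sup>2 \<le> R\<^sup>2"
      using power_mono[of 1 "\<bar>y\<bar>" 2] power_mono[of "\<bar>y\<bar>" R 2] False y by auto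
    have norm_gt: "1 < norm (x, y)" for x
      using norm_snd_le[of y x] y by simp
    have "C / y\<^sup>2 \<le> C / 1"
      using y2 \<open>0 \<le> C\<close> by (intro divide_left_mono) auto
    then have "\<bar>h (x, y)\<bar> \<le> C" for x
      using C_y[OF norm_gt, of x] y by fastforce
    then have "cmod (fourier_integral (\<lambda>x. h (x, y)) k (-r) r) \<le> 4 * C" if "1 \<le> r" for r
      using that C_x[OF norm_gt]
      by (intro norm_fourier_integral_le_of_bounded_inverse_square cont) auto
    moreover have "4 * C \<le> max K (4 * C * R\<^sup>2) / y\<^sup>2"
    proof -
      have "4 * C * y\<^sup>2 \<le> 4 * C * R\<^sup>2"
        using y2 \<open>0 \<le> C\<close> by (intro mult_left_mono) auto
      then have "4 * C \<le> 4 * C * R\<^sup>2 / y\<^sup>2"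
        using y2 y by (auto simp: le_divide_eq)
      also have "\<dots> \<le> max K (4 * C * R\<^sup>2) / y\<^sup>2"
        by (simp add: divide_right_mono)
      finally show ?thesis .
    qed
    ultimately show ?thesis
      unfolding eventually_at_top_linorder by (meson order.trans)
  qed
  then show ?thesis
    by (rule that)
qed

lemma fourier_integral_slice_x_limit:
  assumes smooth: "smooth2 f" and "very_moderate_decrease f" and "moderate_decrease (partial_x f)"
    and "k \<noteq> 0"
  shows "\<exists>L. ((\<lambda>r. fourier_integral (\<lambda>x. f (x, y)) k (-r) r) \<longlongrightarrow> L) at_top \<and>
    (\<forall>K. (\<forall>\<^sub>F r in at_top. cmod (fourier_integral (\<lambda>x. partial_x f (x, y)) k (-r) r) \<le> K)
      \<longrightarrow> cmod L \<le> K / \<bar>k\<bar>)"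
proof -
  have cont: "continuous_on UNIV (\<lambda>x. partial_x f (x, y))"
    by (rule smooth2_continuous_on_slice_x[OF smooth2_partial_x[OF smooth]])
  obtain C where C: "\<And>x y. 1 < norm (x, y) \<Longrightarrow> x \<noteq> 0 \<Longrightarrow> \<bar>partial_x f (x, y)\<bar> \<le> C / x\<^sup>2"
    using moderate_decrease_bounds[OF assms(3)] by metis
  have "\<bar>partial_x f (x, y)\<bar> \<le> C / x\<^sup>2" if "2 \<le> \<bar>x\<bar>" for x
    using C[of x y] norm_fst_le[of x y] that by auto
  then obtain L' where L': "((\<lambda>r. fourier_integral (\<lambda>x. partial_x f (x, y)) k (-r) r) \<longlongrightarrow> L') at_top"
    using fourier_integral_convergent[OF cont] by blast
  have "((\<lambda>x. f (x, y)) \<longlongrightarrow> 0) at_top" "((\<lambda>x. f (x, y)) \<longlongrightarrow> 0) at_bot"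
    using very_moderate_decrease_slice_x_tendsto[OF assms(2)]
    by (auto intro: tendsto_mono at_top_le_at_infinity at_bot_le_at_infinity)
  from fourier_integral_tendsto_by_parts[OF smooth2_has_partial_x[OF smooth] cont this \<open>k \<noteq> 0\<close> L']
  have "((\<lambda>r. fourier_integral (\<lambda>x. f (x, y)) k (-r) r) \<longlongrightarrow> L' / (\<i> * of_real k)) at_top" .
  moreover have "cmod (L' / (\<i> * of_real k)) \<le> K / \<bar>k\<bar>"
    if "\<forall>\<^sub>F r in at_top. cmod (fourier_integral (\<lambda>x. partial_x f (x, y)) k (-r) r) \<le> K" for K
    using Lim_norm_ubound[OF _ L' that] by (simp add: norm_divide norm_mult divide_right_mono)
  ultimately show ?thesis
    by blast
qed

lemma FT_x_moderate_decrease_of_fourier_x_quadratic_decay: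
  assumes smooth: "smooth2 f" and "very_moderate_decrease f" and "moderate_decrease (partial_x f)"
    and "fourier_x_quadratic_decay (partial_x f) k" and "k \<noteq> 0"
  shows "\<forall>y. \<exists>L. ((\<lambda>r. fourier_integral (\<lambda>x. f (x, y)) k (-r) r) \<longlongrightarrow> L) at_top"
    and "\<exists>C>0. \<forall>y. 1 < \<bar>y\<bar> \<longrightarrow> cmod (FT_x f k y) \<le> C / y\<^sup>2"
proof -
  have "\<forall>y. \<exists>L. ((\<lambda>r. fourier_integral (\<lambda>x. f (x, y)) k (-r) r) \<longlongrightarrow> L) at_top \<and>
    (\<forall>K. (\<forall>\<^sub>F r in at_top. cmod (fourier_integral (\<lambda>x. partial_x f (x, y)) k (-r) r) \<le> K)
      \<longrightarrow> cmod L \<le> K / \<bar>k\<bar>)"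
    using fourier_integral_slice_x_limit[OF assms(1-3,5)] by blast
  from choice[OF this] obtain L
    where L: "\<And>y. ((\<lambda>r. fourier_integral (\<lambda>x. f (x, y)) k (-r) r) \<longlongrightarrow> L y) at_top"
    and L_bound: "\<And>y K.
      (\<forall>\<^sub>F r in at_top. cmod (fourier_integral (\<lambda>x. partial_x f (x, y)) k (-r) r) \<le> K)
      \<Longrightarrow> cmod (L y) \<le> K / \<bar>k\<bar>"
    by blast
  then show "\<forall>y. \<exists>L. ((\<lambda>r. fourier_integral (\<lambda>x. f (x, y)) k (-r) r) \<longlongrightarrow> L) at_top"
    by blast
  obtain K where K: "\<And>y. 1 < \<bar>y\<bar> \<Longrightarrow>
      \<forall>\<^sub>F r in at_top. cmod (fourier_integral (\<lambda>x. partial_x f (x, y)) k (-r) r) \<le> K / y\<^sup>2"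
    using fourier_x_quadratic_decay_beyond_one[OF assms(4,3)
        smooth2_continuous_on_slice_x[OF smooth2_partial_x[OF smooth]]] by blast
  have "cmod (FT_x f k y) \<le> max (K / \<bar>k\<bar>) 1 / y\<^sup>2" if "1 < \<bar>y\<bar>" for y
  proof -
    have "FT_x f k y = L y"
      unfolding FT_x_def
      by (rule tendsto_Lim) (use L[of y] in \<open>simp_all add: fourier_integral_def fourier_kernel_def\<close>)
    then have "cmod (FT_x f k y) \<le> (K / \<bar>k\<bar>) / y\<^sup>2"
      using L_bound[OF K[OF that]] by (simp add: mult.commute)
    also have "\<dots> \<le> max (K / \<bar>k\<bar>) 1 / y\<^sup>2"
      by (rule divide_right_mono) auto
    finally show ?thesis .
  qed
  moreover have "0 < max (K / \<bar>k\<bar>) (1::real)"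
    by simp
  ultimately show "\<exists>C>0. \<forall>y. 1 < \<bar>y\<bar> \<longrightarrow> cmod (FT_x f k y) \<le> C / y\<^sup>2"
    by blast
qed

lemma quasi_normal_fourier_x_quadratic_decay:
  assumes "smooth2 f" "quasi_normal f" "k \<noteq> 0"
  shows "fourier_x_quadratic_decay (partial_x f) k"
proof (rule fourier_x_quadratic_decay_of_zeros_in_shells[OF smooth2_partial_x[OF assms(1)] _ _
      assms(3)])
  show "moderate_decrease (partial_x f)"
    using assms(2) unfolding quasi_normal_def conds_i_to_iv_def by blast
  show "zeros_in_shells (\<lambda>y x. partial_x (partial_x f) (x, y))"
    using assms(2) unfolding quasi_normal_def deriv_slice_x by blast
qed

lemma partial_x_eq_add:
  assumes "smooth2 f1" "smooth2 f2" and "\<And>x. f (x, y) = f1 (x, y) + f2 (x, y)"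
  shows "partial_x f (x, y) = partial_x f1 (x, y) + partial_x f2 (x, y)"
proof -
  have "partial_x f (x, y) = deriv (\<lambda>x. f1 (x, y) + f2 (x, y)) x"
    by (simp add: partial_x_def assms(3))
  also have "\<dots> = partial_x f1 (x, y) + partial_x f2 (x, y)"
    by (intro DERIV_imp_deriv DERIV_add smooth2_has_partial_x assms(1,2))
  finally show ?thesis .
qed

lemma quasi_split_normal_fourier_x_quadratic_decay:
  assumes "quasi_split_normal f" "k \<noteq> 0"
  shows "fourier_x_quadratic_decay (partial_x f) k"
proof -
  obtain R f1 f2 where smooth: "smooth2 f1" "smooth2 f2" and "quasi_normal f1" "quasi_normal f2"
    and split: "\<And>p. R < norm p \<Longrightarrow> f p = f1 p + f2 p"
    using assms(1) unfolding quasi_split_normal_def by blast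
  have sum: "partial_x f (x, y) = partial_x f1 (x, y) + partial_x f2 (x, y)" if "R < \<bar>y\<bar>" for x y
  proof (rule partial_x_eq_add[OF smooth])
    show "f (x', y) = f1 (x', y) + f2 (x', y)" for x'
      using split norm_snd_le[of y x'] that by simp
  qed
  have "fourier_x_quadratic_decay (partial_x f1) k" "fourier_x_quadratic_decay (partial_x f2) k"
    using quasi_normal_fourier_x_quadratic_decay smooth \<open>quasi_normal f1\<close> \<open>quasi_normal f2\<close>
      \<open>k \<noteq> 0\<close> by blast+
  moreover have "continuous_on UNIV (\<lambda>x. partial_x f1 (x, y))"
    "continuous_on UNIV (\<lambda>x. partial_x f2 (x, y))" for y
    using smooth2_continuous_on_slice_x smooth2_partial_x smooth by blast+
  ultimately show ?thesis
    using fourier_x_quadratic_decay_add sum by blast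
qed

lemma quasi_normal_swap:
  assumes "quasi_normal f"
  shows "quasi_normal (f \<circ> prod.swap)"
  using assms conds_i_to_iv_swap unfolding quasi_normal_def by (simp add: comp_def)

lemma quasi_split_normal_swap:
  assumes "quasi_split_normal f"
  shows "quasi_split_normal (f \<circ> prod.swap)"
proof -
  obtain R f1 f2 where smooth: "smooth2 f1" "smooth2 f2"
    and normal: "quasi_normal f1" "quasi_normal f2"
    and split: "\<And>p. R < norm p \<Longrightarrow> f p = f1 p + f2 p"
    using assms unfolding quasi_split_normal_def by blast
  have "conds_i_to_iv (f \<circ> prod.swap)"
    using assms conds_i_to_iv_swap unfolding quasi_split_normal_def by blast
  moreover have "(f \<circ> prod.swap) p = (f1 \<circ> prod.swap) p + (f2 \<circ> prod.swap) p" if "R < norm p" for p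
    using split[of "prod.swap p"] that by (simp add: norm_swap)
  ultimately show ?thesis
    unfolding quasi_split_normal_def
    by (intro conjI exI[of _ R] exI[of _ "f1 \<circ> prod.swap"] exI[of _ "f2 \<circ> prod.swap"]
        smooth2_swap quasi_normal_swap smooth normal allI impI) auto
qed

lemma FT_y_eq_FT_x_swap: "FT_y f x k = FT_x (f \<circ> prod.swap) k x"
  by (simp add: FT_x_def FT_y_def)

lemma FT_x_moderate_decrease:
  assumes "smooth2 f" "quasi_normal f \<or> quasi_split_normal f" "k \<noteq> 0"
  shows "\<forall>y. \<exists>L. ((\<lambda>r. integral {-r..r}
            (\<lambda>x. complex_of_real (f (x, y)) * exp (- \<i> * of_real k * of_real x))) \<longlongrightarrow> L) at_top"
    and "\<exists>C>0. \<forall>y. \<bar>y\<bar> > 1 \<longrightarrow> cmod (FT_x f k y) \<le> C / y\<^sup>2"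
proof -
  have "conds_i_to_iv f"
    using assms(2) unfolding quasi_normal_def quasi_split_normal_def by blast
  then have "very_moderate_decrease f" "moderate_decrease (partial_x f)"
    unfolding conds_i_to_iv_def by blast+
  moreover have "fourier_x_quadratic_decay (partial_x f) k"
    using assms quasi_normal_fourier_x_quadratic_decay quasi_split_normal_fourier_x_quadratic_decay
    by blast
  ultimately show "\<forall>y. \<exists>L. ((\<lambda>r. integral {-r..r}
            (\<lambda>x. complex_of_real (f (x, y)) * exp (- \<i> * of_real k * of_real x))) \<longlongrightarrow> L) at_top"
    and "\<exists>C>0. \<forall>y. \<bar>y\<bar> > 1 \<longrightarrow> cmod (FT_x f k y) \<le> C / y\<^sup>2"
    using FT_x_moderate_decrease_of_fourier_x_quadratic_decay[OF assms(1) _ _ _ assms(3)]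
    unfolding fourier_integral_def fourier_kernel_def by blast+
qed

theorem lemma11:
  fixes f :: "real \<times> real \<Rightarrow> real"
  assumes "smooth2 f"
    and "quasi_normal f \<or> quasi_split_normal f"
  shows "(\<forall>k1 y. k1 \<noteq> 0 \<longrightarrow> (\<exists>L. ((\<lambda>r. integral {-r..r}
            (\<lambda>x. complex_of_real (f (x, y)) * exp (- \<i> * of_real k1 * of_real x))) \<longlongrightarrow> L) at_top))
       \<and> (\<forall>k2 x. k2 \<noteq> 0 \<longrightarrow> (\<exists>L. ((\<lambda>r. integral {-r..r}
            (\<lambda>y. complex_of_real (f (x, y)) * exp (- \<i> * of_real k2 * of_real y))) \<longlongrightarrow> L) at_top))
       \<and> (\<forall>k1. k1 \<noteq> 0 \<longrightarrow> (\<exists>C>0. \<forall>y. \<bar>y\<bar> > 1 \<longrightarrow> cmod (FT_x f k1 y) \<le> C / y\<^sup>2))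
       \<and> (\<forall>k2. k2 \<noteq> 0 \<longrightarrow> (\<exists>C>0. \<forall>x. \<bar>x\<bar> > 1 \<longrightarrow> cmod (FT_y f x k2) \<le> C / x\<^sup>2))"
proof -
  have swapped: "smooth2 (f \<circ> prod.swap)"
    "quasi_normal (f \<circ> prod.swap) \<or> quasi_split_normal (f \<circ> prod.swap)"
    using assms smooth2_swap quasi_normal_swap quasi_split_normal_swap by blast+
  show ?thesis
    unfolding FT_y_eq_FT_x_swap
    using FT_x_moderate_decrease[OF assms] FT_x_moderate_decrease[OF swapped] by simp
qed

end
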